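(* Let $\kappa\ge 3$ and $n\ge 1$ be integers, $r=\lfloor(\kappa-2)/2\rfloor$, $r'=\lceil(\kappa-2)/2\rceil$, and let $F$ be a field. Let $p=(p_m)_{m\in\mathbb Z}$, $q=(q_m)_{m\in\mathbb Z}$ be $n$-periodic sequences in $F$, and write $(p^{(k)},q^{(k)})=\Phi^k(p,q)$ for $k\in\mathbb Z$, where $\Phi$ is the map defined below; assume all these iterates are defined (no division by zero occurs). Let $Y:\{(i,j,k)\in\mathbb Z^3: i+j+k\equiv 0 \bmod 2\}\to F\setminus\{0,-1\}$ satisfy the $Y$-system $$Y_{i,j,k+1}Y_{i,j,k-1}=\frac{(1+Y_{i+1,j,k})(1+Y_{i-1,j,k})}{(1+Y_{i,j+1,k}^{-1})(1+Y_{i,j-1,k}^{-1})}\quad\text{for all }(i,j,k)\text{ with } i+j+k\text{ odd},$$ with initial conditions $$Y_{i,j,-1}=\Big(q_{((\kappa-2)i+\kappa j+r-r')/2}\Big)^{-1}\ (i+j\text{ odd}),\qquad Y_{i,j,0}=p_{((\kappa-2)i+\kappa j)/2}\ (i+j\text{ even}).$$ Then for all $i,j,k\in\mathbb Z$: $$p^{(k)}_{((\kappa-2)i+\kappa j+k(r-r'))/2}=Y_{i,j,k}\quad\text{if } i+j+k\equiv 0\bmod 2,$$ $$q^{(k)}_{((\kappa-2)i+\kappa j+(k+1)(r-r'))/2}=Y_{i,j,k-1}^{-1}\quad\text{if } i+j+k\equiv 1\bmod 2.$$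
   Context: The map $\Phi$ (the higher pentagram map $T_\kappa$ written in the $(p,q)$ coordinates of twisted $n$-gons) sends a pair of $n$-periodic sequences $(p,q)$ to $(p',q')$ with $$q'_m=p_{m+r'-r}^{-1},\qquad p'_m=q_m\,\frac{(1+p_{m-r})(1+p_{m+r'})}{(1+p_{m-r-1}^{-1})(1+p_{m+r'+1}^{-1})}.$$ $\Phi$ is invertible where defined (one recovers $p$ from $q'$ and then $q$ from $p'$), and for $k<0$, $\Phi^k$ denotes the $|k|$-fold iterate of $\Phi^{-1}$. All subscripts appearing are integers. *)

theory Defs
  imports Complex_Main
begin

definition rlo :: "int \<Rightarrow> int" where
  "rlo \<kappa> = \<lfloor>real_of_int (\<kappa> - 2) / 2\<rfloor>"

definition rhi :: "int \<Rightarrow> int" where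
  "rhi \<kappa> = \<lceil>real_of_int (\<kappa> - 2) / 2\<rceil>"

type_synonym 'a seqpair = "(int \<Rightarrow> 'a) \<times> (int \<Rightarrow> 'a)"

definition Phi :: "int \<Rightarrow> 'a::field seqpair \<Rightarrow> 'a seqpair" where
  "Phi \<kappa> pq = (let p = fst pq; q = snd pq; r = rlo \<kappa>; r' = rhi \<kappa> in
     (\<lambda>m. q m * ((1 + p (m - r)) * (1 + p (m + r')))
                / ((1 + inverse (p (m - r - 1))) * (1 + inverse (p (m + r' + 1)))),
      \<lambda>m. inverse (p (m + r' - r))))"

definition Phi_defined :: "int \<Rightarrow> 'a::field seqpair \<Rightarrow> bool" where
  "Phi_defined \<kappa> pq = (let p = fst pq; r = rlo \<kappa>; r' = rhi \<kappa> in
     (\<forall>m. p m \<noteq> 0) \<and>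
     (\<forall>m. (1 + inverse (p (m - r - 1))) * (1 + inverse (p (m + r' + 1))) \<noteq> 0))"

definition is_Phi_orbit :: "int \<Rightarrow> (int \<Rightarrow> 'a::field seqpair) \<Rightarrow> bool" where
  "is_Phi_orbit \<kappa> X = (\<forall>k. Phi_defined \<kappa> (X k) \<and> X (k + 1) = Phi \<kappa> (X k))"

end

theory Submission
  imports Defs
begin

(* Place the entry p_m of the k-th iterate of Phi at the lattice point (i,j,k)
   with 2m = (kappa-2)i + kappa j + k(r - r'), and the entry q_m at (i,j,k-1) with the analogous
   index shifted by one time step.  Along a node with i+j+k odd, the four arguments of p that
   enter the formula for the new p' at the centre are exactly the four horizontal neighbours
   (i +- 1, j, k), (i, j +- 1, k), and q at the centre is the inverse of Y one step below.
   Hence one application of Phi is one step of the Y-system, and conversely, since Y is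
   nonzero on the lattice, one step of Phi can be undone.  The argument is purely local. *)

lemma rlo_eq: "rlo \<kappa> = (\<kappa> - 2) div 2"
  using floor_divide_of_int_eq[of "\<kappa> - 2" 2] unfolding rlo_def by simp

lemma rhi_eq: "rhi \<kappa> = - ((2 - \<kappa>) div 2)"
proof -
  have "- (real_of_int (\<kappa> - 2) / 2) = real_of_int (2 - \<kappa>) / real_of_int 2"
    by (simp add: field_simps)
  then show ?thesis
    unfolding rhi_def ceiling_def using floor_divide_of_int_eq[of "2 - \<kappa>" 2] by metis
qed

lemma rlo_plus_rhi: "rlo \<kappa> + rhi \<kappa> = \<kappa> - 2"
  unfolding rlo_eq rhi_eq by presburger

lemma rlo_minus_rhi: "rlo \<kappa> - rhi \<kappa> = (if even \<kappa> then 0 else -1)"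
  unfolding rlo_eq rhi_eq by presburger

definition lattice_index :: "int \<Rightarrow> int \<Rightarrow> int \<Rightarrow> int \<Rightarrow> int" where
  "lattice_index \<kappa> i j k = ((\<kappa> - 2) * i + \<kappa> * j + k * (rlo \<kappa> - rhi \<kappa>)) div 2"

lemma lattice_index_double:
  assumes "even (i + j + k)"
  shows "2 * lattice_index \<kappa> i j k = (\<kappa> - 2) * i + \<kappa> * j + k * (rlo \<kappa> - rhi \<kappa>)"
proof -
  have "even ((\<kappa> - 2) * i + \<kappa> * j + k * (rlo \<kappa> - rhi \<kappa>))"
    using assms by (cases "even \<kappa>") (auto simp: rlo_minus_rhi)
  then show ?thesis unfolding lattice_index_def by simp
qed

lemma lattice_index_neighbours:
  fixes \<kappa> i j k :: int
  assumes "odd (i + j + k)"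
  defines "c \<equiv> lattice_index \<kappa> i j (k + 1)"
  shows "lattice_index \<kappa> (i + 1) j k = c + rhi \<kappa>"
    and "lattice_index \<kappa> (i - 1) j k = c - rlo \<kappa>"
    and "lattice_index \<kappa> i (j + 1) k = c + rhi \<kappa> + 1"
    and "lattice_index \<kappa> i (j - 1) k = c - rlo \<kappa> - 1"
proof -
  have centre: "2 * c = (\<kappa> - 2) * i + \<kappa> * j + (k + 1) * (rlo \<kappa> - rhi \<kappa>)"
    unfolding c_def using assms by (intro lattice_index_double) presburger
  have even_nbrs: "even ((i + 1) + j + k)" "even ((i - 1) + j + k)"
    "even (i + (j + 1) + k)" "even (i + (j - 1) + k)"
    using assms by presburger+
  note doubles = even_nbrs[THEN lattice_index_double[where \<kappa> = \<kappa>]]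
  have "2 * lattice_index \<kappa> (i + 1) j k = 2 * (c + rhi \<kappa>)"
    and "2 * lattice_index \<kappa> (i - 1) j k = 2 * (c - rlo \<kappa>)"
    and "2 * lattice_index \<kappa> i (j + 1) k = 2 * (c + rhi \<kappa> + 1)"
    and "2 * lattice_index \<kappa> i (j - 1) k = 2 * (c - rlo \<kappa> - 1)"
    using doubles centre rlo_plus_rhi[of \<kappa>] by (simp_all add: algebra_simps)
  then show "lattice_index \<kappa> (i + 1) j k = c + rhi \<kappa>"
    and "lattice_index \<kappa> (i - 1) j k = c - rlo \<kappa>"
    and "lattice_index \<kappa> i (j + 1) k = c + rhi \<kappa> + 1"
    and "lattice_index \<kappa> i (j - 1) k = c - rlo \<kappa> - 1"
    by simp_all
qed

text \<open>Two time steps up, the index moves by r' - r: this is the shift by which the new q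
  is read off the old p.\<close>

lemma lattice_index_two_up:
  assumes "even (i + j + k)"
  shows "lattice_index \<kappa> i j (k + 2) + rhi \<kappa> - rlo \<kappa> = lattice_index \<kappa> i j k"
proof -
  have "even (i + j + (k + 2))" using assms by presburger
  then have "2 * (lattice_index \<kappa> i j (k + 2) + rhi \<kappa> - rlo \<kappa>) = 2 * lattice_index \<kappa> i j k"
    using lattice_index_double[OF assms, of \<kappa>] lattice_index_double[of i j "k + 2" \<kappa>]
    by (simp add: algebra_simps)
  then show ?thesis by simp
qed

lemma Phi_fst_at_node:
  fixes \<kappa> i j k :: int and pq :: "'a::field seqpair"
  assumes "odd (i + j + k)"
  defines "c \<equiv> lattice_index \<kappa> i j (k + 1)"
    and "P \<equiv> \<lambda>a b. fst pq (lattice_index \<kappa> a b k)"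
  shows "fst (Phi \<kappa> pq) c = snd pq c *
           (((1 + P (i + 1) j) * (1 + P (i - 1) j)) /
            ((1 + inverse (P i (j + 1))) * (1 + inverse (P i (j - 1)))))"
  using lattice_index_neighbours[OF assms(1), where \<kappa> = \<kappa>]
  unfolding Phi_def Let_def P_def c_def by (simp add: ac_simps)

lemma Phi_snd_at_node:
  assumes "even (i + j + k)"
  shows "snd (Phi \<kappa> pq) (lattice_index \<kappa> i j (k + 2)) = inverse (fst pq (lattice_index \<kappa> i j k))"
  using lattice_index_two_up[OF assms, of \<kappa>] unfolding Phi_def Let_def by (simp add: algebra_simps)

definition Y_system :: "(int \<Rightarrow> int \<Rightarrow> int \<Rightarrow> 'a::field) \<Rightarrow> bool" where
  "Y_system Y \<longleftrightarrow> (\<forall>i j k. odd (i + j + k) \<longrightarrow>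
     Y i j (k + 1) * Y i j (k - 1) =
       ((1 + Y (i + 1) j k) * (1 + Y (i - 1) j k)) /
       ((1 + inverse (Y i (j + 1) k)) * (1 + inverse (Y i (j - 1) k))))"

definition Y_nonzero :: "(int \<Rightarrow> int \<Rightarrow> int \<Rightarrow> 'a::field) \<Rightarrow> bool" where
  "Y_nonzero Y \<longleftrightarrow> (\<forall>i j k. even (i + j + k) \<longrightarrow> Y i j k \<noteq> 0)"

definition agrees :: "int \<Rightarrow> (int \<Rightarrow> 'a::field seqpair) \<Rightarrow> (int \<Rightarrow> int \<Rightarrow> int \<Rightarrow> 'a) \<Rightarrow> int \<Rightarrow> bool" where
  "agrees \<kappa> X Y k \<longleftrightarrow>
     (\<forall>i j. even (i + j + k) \<longrightarrow> fst (X k) (lattice_index \<kappa> i j k) = Y i j k) \<and>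
     (\<forall>i j. odd (i + j + k) \<longrightarrow> snd (X k) (lattice_index \<kappa> i j (k + 1)) = inverse (Y i j (k - 1)))"

lemma Phi_fst_by_Y:
  fixes \<kappa> i j k :: int and pq :: "'a::field seqpair"
  assumes "Y_system Y" "odd (i + j + k)"
    and fstY: "\<And>a b. even (a + b + k) \<Longrightarrow> fst pq (lattice_index \<kappa> a b k) = Y a b k"
  defines "c \<equiv> lattice_index \<kappa> i j (k + 1)"
  shows "fst (Phi \<kappa> pq) c = snd pq c * (Y i j (k + 1) * Y i j (k - 1))"
proof -
  have "even ((i + 1) + j + k)" "even ((i - 1) + j + k)"
    "even (i + (j + 1) + k)" "even (i + (j - 1) + k)"
    using assms(2) by presburger+
  then show ?thesis
    using Phi_fst_at_node[OF assms(2), where \<kappa> = \<kappa> and pq = pq] fstY assms(1,2)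
    unfolding c_def Y_system_def by simp
qed

lemma agrees_step_forward:
  assumes step: "X (k + 1) = Phi \<kappa> (X k)"
    and Y: "Y_system Y" "Y_nonzero Y"
    and agree: "agrees \<kappa> X Y k"
  shows "agrees \<kappa> X Y (k + 1)"
proof -
  have fstY: "fst (X k) (lattice_index \<kappa> a b k) = Y a b k" if "even (a + b + k)" for a b
    using agree that unfolding agrees_def by blast
  have sndY: "snd (X k) (lattice_index \<kappa> a b (k + 1)) = inverse (Y a b (k - 1))"
    if "odd (a + b + k)" for a b
    using agree that unfolding agrees_def by blast
  have new_p: "fst (X (k + 1)) (lattice_index \<kappa> i j (k + 1)) = Y i j (k + 1)"
    if "even (i + j + (k + 1))" for i j
  proof -
    have odd_node: "odd (i + j + k)" and "even (i + j + (k - 1))" using that by presburger+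
    then have "Y i j (k - 1) \<noteq> 0" using Y(2) unfolding Y_nonzero_def by blast
    then show ?thesis
      using Phi_fst_by_Y[OF Y(1) odd_node fstY] sndY[OF odd_node] step by simp
  qed
  have new_q: "snd (X (k + 1)) (lattice_index \<kappa> i j (k + 1 + 1)) = inverse (Y i j (k + 1 - 1))"
    if "odd (i + j + (k + 1))" for i j
  proof -
    have "even (i + j + k)" using that by presburger
    then show ?thesis
      using Phi_snd_at_node[of i j k \<kappa> "X k"] fstY step by (simp add: add.assoc)
  qed
  show ?thesis unfolding agrees_def using new_p new_q by blast
qed

lemma agrees_step_backward:
  assumes step: "X (k + 1) = Phi \<kappa> (X k)"
    and Y: "Y_system Y" "Y_nonzero Y"
    and agree: "agrees \<kappa> X Y (k + 1)"
  shows "agrees \<kappa> X Y k"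
proof -
  have fstY': "fst (X (k + 1)) (lattice_index \<kappa> a b (k + 1)) = Y a b (k + 1)"
    if "even (a + b + (k + 1))" for a b
    using agree that unfolding agrees_def by blast
  have sndY': "snd (X (k + 1)) (lattice_index \<kappa> a b (k + 2)) = inverse (Y a b k)"
    if "odd (a + b + (k + 1))" for a b
    using agree that unfolding agrees_def by (simp add: add.assoc)
  text \<open>The old p is recovered from the new q.\<close>
  have old_p: "fst (X k) (lattice_index \<kappa> i j k) = Y i j k" if even_node: "even (i + j + k)" for i j
  proof -
    have "odd (i + j + (k + 1))" using even_node by presburger
    then have "inverse (fst (X k) (lattice_index \<kappa> i j k)) = inverse (Y i j k)"
      using sndY' Phi_snd_at_node[OF even_node, of \<kappa> "X k"] step by simp
    then show ?thesis by simp
  qed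
  text \<open>The old q is recovered from the new p by cancelling the nonzero Y(k+1).\<close>
  have old_q: "snd (X k) (lattice_index \<kappa> i j (k + 1)) = inverse (Y i j (k - 1))"
    if odd_node: "odd (i + j + k)" for i j
  proof -
    have "even (i + j + (k + 1))" and "even (i + j + (k - 1))" using odd_node by presburger+
    then have up: "fst (X (k + 1)) (lattice_index \<kappa> i j (k + 1)) = Y i j (k + 1)"
      and nz: "Y i j (k + 1) \<noteq> 0" "Y i j (k - 1) \<noteq> 0"
      using fstY' Y(2) unfolding Y_nonzero_def by blast+
    have "Y i j (k + 1) * 1 = Y i j (k + 1) * (snd (X k) (lattice_index \<kappa> i j (k + 1)) * Y i j (k - 1))"
      using Phi_fst_by_Y[OF Y(1) odd_node old_p] step up by (simp add: ac_simps)
    then have "snd (X k) (lattice_index \<kappa> i j (k + 1)) * Y i j (k - 1) = 1"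
      using nz(1) by (metis mult_left_cancel)
    then show ?thesis using nz(2) by (simp add: field_simps)
  qed
  show ?thesis unfolding agrees_def using old_p old_q by blast
qed

lemma agrees_everywhere:
  assumes orbit: "\<And>k. X (k + 1) = Phi \<kappa> (X k)"
    and Y: "Y_system Y" "Y_nonzero Y"
    and start: "agrees \<kappa> X Y 0"
  shows "agrees \<kappa> X Y k"
proof (induction k rule: int_induct[where k = 0])
  case base
  show ?case by (rule start)
next
  case (step1 k)
  then show ?case using agrees_step_forward[OF orbit[of k] Y] by blast
next
  case (step2 k)
  then show ?case using agrees_step_backward[OF orbit[of "k - 1"] Y] by simp
qed

theorem mainTheorem1:
  fixes \<kappa> :: int and n :: int
    and p q :: "int \<Rightarrow> 'a::field"
    and X :: "int \<Rightarrow> 'a seqpair"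
    and Y :: "int \<Rightarrow> int \<Rightarrow> int \<Rightarrow> 'a"
  assumes "\<kappa> \<ge> 3" and "n \<ge> 1"
    and "\<forall>m. p (m + n) = p m" and "\<forall>m. q (m + n) = q m"
    and "X 0 = (p, q)"
    and "is_Phi_orbit \<kappa> X"
    and "\<forall>i j k. even (i + j + k) \<longrightarrow> Y i j k \<noteq> 0 \<and> Y i j k \<noteq> -1"
    and "\<forall>i j k. odd (i + j + k) \<longrightarrow>
           Y i j (k + 1) * Y i j (k - 1) =
           ((1 + Y (i + 1) j k) * (1 + Y (i - 1) j k)) /
           ((1 + inverse (Y i (j + 1) k)) * (1 + inverse (Y i (j - 1) k)))"
    and "\<forall>i j. odd (i + j) \<longrightarrow>
           Y i j (-1) = inverse (q (((\<kappa> - 2) * i + \<kappa> * j + rlo \<kappa> - rhi \<kappa>) div 2))"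
    and "\<forall>i j. even (i + j) \<longrightarrow>
           Y i j 0 = p (((\<kappa> - 2) * i + \<kappa> * j) div 2)"
  shows "\<forall>i j k.
     (even (i + j + k) \<longrightarrow>
        fst (X k) (((\<kappa> - 2) * i + \<kappa> * j + k * (rlo \<kappa> - rhi \<kappa>)) div 2) = Y i j k) \<and>
     (odd (i + j + k) \<longrightarrow>
        snd (X k) (((\<kappa> - 2) * i + \<kappa> * j + (k + 1) * (rlo \<kappa> - rhi \<kappa>)) div 2)
          = inverse (Y i j (k - 1)))"
proof -
  have orbit: "X (k + 1) = Phi \<kappa> (X k)" for k
    using assms(6) unfolding is_Phi_orbit_def by blast
  have Y: "Y_system Y" "Y_nonzero Y"
    using assms(7,8) unfolding Y_system_def Y_nonzero_def by blast+
  have "agrees \<kappa> X Y 0"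
    using assms(5,9,10) unfolding agrees_def lattice_index_def by (simp add: add_diff_eq)
  then have "agrees \<kappa> X Y k" for k
    using agrees_everywhere[where X = X, OF orbit Y] by blast
  then show ?thesis unfolding agrees_def lattice_index_def by blast
qed

end
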